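(* Let $G$ be a graph of order $n\ge 1$. Then $$\frac{n^2+n+2}{2}\le d(G)\le 2^n.$$ The left equality holds if and only if $G\cong K_{n_1,n_2,\ldots,n_k}$ is a complete multipartite graph with $n_i\le 2$ for all $1\le i\le k$ and $n_1+\cdots+n_k=n$. The right equality holds if and only if $G\cong sK_1\cup tK_2$, a disjoint union of $s$ isolated vertices and $t$ disjoint edges, with $s+2t=n$.
   Context: All graphs are finite, simple and undirected. A subset $D\subseteq V(G)$ is a dissociation set of $G$ if the induced subgraph $G[D]$ has maximum degree at most $1$; the empty set is a dissociation set. $d(G)$ denotes the total number of dissociation sets of $G$, including the empty set. In particular, the graph with no vertices has $d=1$. *)

theory Defs
  imports Complex_Main "HOL-Library.Disjoint_Sets"
begin

definition simple_graph :: "'a set \<Rightarrow> ('a \<Rightarrow> 'a \<Rightarrow> bool) \<Rightarrow> bool" where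
  "simple_graph V E \<longleftrightarrow> finite V \<and>
     (\<forall>u v. E u v \<longrightarrow> u \<in> V \<and> v \<in> V) \<and>
     (\<forall>u v. E u v \<longrightarrow> E v u) \<and> (\<forall>v. \<not> E v v)"

definition dissociation_set :: "'a set \<Rightarrow> ('a \<Rightarrow> 'a \<Rightarrow> bool) \<Rightarrow> 'a set \<Rightarrow> bool" where
  "dissociation_set V E D \<longleftrightarrow> D \<subseteq> V \<and> (\<forall>v\<in>D. card {u\<in>D. E v u} \<le> 1)"

definition diss_count :: "'a set \<Rightarrow> ('a \<Rightarrow> 'a \<Rightarrow> bool) \<Rightarrow> nat" where
  "diss_count V E = card {D. dissociation_set V E D}"

text \<open>G is (isomorphic to) a complete multipartite graph K_{n_1,...,n_k} with all
  n_i \<le> 2: V is partitioned into nonempty parts of size at most 2 and two vertices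
  are adjacent iff they lie in different parts.\<close>
definition complete_multipartite_le2 :: "'a set \<Rightarrow> ('a \<Rightarrow> 'a \<Rightarrow> bool) \<Rightarrow> bool" where
  "complete_multipartite_le2 V E \<longleftrightarrow>
     (\<exists>P. partition_on V P \<and> (\<forall>X\<in>P. card X \<le> 2) \<and>
          (\<forall>u\<in>V. \<forall>v\<in>V. E u v \<longleftrightarrow> (\<exists>X\<in>P. u \<in> X \<and> v \<notin> X)))"

text \<open>G is (isomorphic to) sK_1 \<union> tK_2: V is partitioned into parts of size 1 or 2
  and two vertices are adjacent iff they are distinct and lie in the same part.\<close>
definition union_K1_K2 :: "'a set \<Rightarrow> ('a \<Rightarrow> 'a \<Rightarrow> bool) \<Rightarrow> bool" where
  "union_K1_K2 V E \<longleftrightarrow>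
     (\<exists>P. partition_on V P \<and> (\<forall>X\<in>P. card X = 1 \<or> card X = 2) \<and>
          (\<forall>u\<in>V. \<forall>v\<in>V. E u v \<longleftrightarrow> (u \<noteq> v \<and> (\<exists>X\<in>P. u \<in> X \<and> v \<in> X))))"

end

theory Submission
  imports Defs
begin

(* Dissociation sets form a down-closed subfamily of Pow V containing every set of at most
   two vertices, which gives both bounds. The upper bound is attained iff V itself is a
   dissociation set, i.e. G has maximum degree at most 1; these graphs are exactly sK_1 + tK_2,
   since their closed neighbourhoods partition V. The lower bound is attained iff no three
   vertices form a dissociation set, i.e. no vertex has two non-neighbours. That says the
   complement of G has maximum degree at most 1, so by the same description G is complete
   multipartite with parts of size at most 2. *)

definition max_degree_le_one :: "'a set \<Rightarrow> ('a \<Rightarrow> 'a \<Rightarrow> bool) \<Rightarrow> bool" where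
  "max_degree_le_one V R \<longleftrightarrow> (\<forall>v\<in>V. card {u\<in>V. R v u} \<le> 1)"

definition graph_complement :: "('a \<Rightarrow> 'a \<Rightarrow> bool) \<Rightarrow> 'a \<Rightarrow> 'a \<Rightarrow> bool" where
  "graph_complement E u v \<longleftrightarrow> u \<noteq> v \<and> \<not> E u v"

lemma dissociation_set_iff_max_degree_le_one:
  "dissociation_set V E D \<longleftrightarrow> D \<subseteq> V \<and> max_degree_le_one D E"
  by (simp add: dissociation_set_def max_degree_le_one_def)

lemma max_degree_le_one_iff_unique_neighbour:
  assumes "finite V"
  shows "max_degree_le_one V R \<longleftrightarrow> (\<forall>v\<in>V. \<forall>u\<in>V. \<forall>w\<in>V. R v u \<longrightarrow> R v w \<longrightarrow> u = w)"
  using assms by (auto simp: max_degree_le_one_def card_le_Suc0_iff_eq)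

lemma max_degree_le_one_subset:
  assumes "finite V" "max_degree_le_one V R" "U \<subseteq> V"
  shows "max_degree_le_one U R"
  using assms finite_subset[OF \<open>U \<subseteq> V\<close>]
  by (auto simp: max_degree_le_one_iff_unique_neighbour)

lemma max_degree_le_one_if_card_le_2:
  assumes "finite V" "card V \<le> 2" "\<And>v. \<not> R v v"
  shows "max_degree_le_one V R"
proof -
  have "card {u\<in>V. R v u} \<le> 1" if "v \<in> V" for v
  proof -
    have "card {u\<in>V. R v u} \<le> card (V - {v})"
      using assms by (intro card_mono) auto
    then show ?thesis using assms that by simp
  qed
  then show ?thesis by (simp add: max_degree_le_one_def)
qed

lemma max_degree_le_one_equiv:
  assumes "finite V" "\<And>u v. R u v \<Longrightarrow> R v u" "max_degree_le_one V R"
  shows "equiv V {(u, v) \<in> V \<times> V. u = v \<or> R u v}"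
proof (rule equivI)
  have "R u w" if "R u v" "R v w" "u \<noteq> w" "u \<in> V" "v \<in> V" "w \<in> V" for u v w
    using assms that unfolding max_degree_le_one_iff_unique_neighbour[OF \<open>finite V\<close>] by blast
  then show "trans {(u, v) \<in> V \<times> V. u = v \<or> R u v}"
    unfolding trans_def by blast
qed (use assms in \<open>auto simp: refl_on_def sym_def\<close>)

lemma ex_quotient_class_iff:
  assumes "equiv A r"
  shows "(\<exists>X\<in>A // r. u \<in> X \<and> v \<in> X) \<longleftrightarrow> (u, v) \<in> r"
proof
  assume "\<exists>X\<in>A // r. u \<in> X \<and> v \<in> X"
  then show "(u, v) \<in> r"
    using assms by (auto elim!: quotientE) (metis equiv_class_eq_iff)
next
  assume "(u, v) \<in> r"
  then show "\<exists>X\<in>A // r. u \<in> X \<and> v \<in> X"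
    using equiv_class_eq_iff[OF assms] by (intro bexI[of _ "r `` {u}"] quotientI) auto
qed

lemma partition_on_block_unique:
  assumes "partition_on V P" "X \<in> P" "Y \<in> P" "u \<in> X" "u \<in> Y"
  shows "X = Y"
  using assms unfolding partition_on_def disjoint_def by blast

lemma max_degree_le_one_iff_partition:
  assumes fin: "finite V" and sym: "\<And>u v. R u v \<Longrightarrow> R v u" and irrefl: "\<And>v. \<not> R v v"
  shows "max_degree_le_one V R \<longleftrightarrow>
    (\<exists>P. partition_on V P \<and> (\<forall>X\<in>P. card X \<le> 2) \<and>
         (\<forall>u\<in>V. \<forall>v\<in>V. R u v \<longleftrightarrow> u \<noteq> v \<and> (\<exists>X\<in>P. u \<in> X \<and> v \<in> X)))"
proof
  assume deg: "max_degree_le_one V R"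
  define C where "C = {(u, v) \<in> V \<times> V. u = v \<or> R u v}"
  have C: "equiv V C"
    unfolding C_def using max_degree_le_one_equiv[OF fin sym deg] .
  have "card X \<le> 2" if "X \<in> V // C" for X
  proof -
    obtain u where u: "u \<in> V" "X = C `` {u}"
      using \<open>X \<in> V // C\<close> by (rule quotientE)
    have "card {v\<in>V. R u v} \<le> 1"
      using deg u by (simp add: max_degree_le_one_def)
    moreover have "X = insert u {v\<in>V. R u v}"
      using u by (auto simp: C_def)
    ultimately show ?thesis
      using fin by (simp add: card_insert_if)
  qed
  moreover have "R u v \<longleftrightarrow> u \<noteq> v \<and> (\<exists>X\<in>V // C. u \<in> X \<and> v \<in> X)" if "u \<in> V" "v \<in> V" for u v
    using that irrefl ex_quotient_class_iff[OF C, of u v] by (auto simp: C_def)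
  ultimately show "\<exists>P. partition_on V P \<and> (\<forall>X\<in>P. card X \<le> 2) \<and>
         (\<forall>u\<in>V. \<forall>v\<in>V. R u v \<longleftrightarrow> u \<noteq> v \<and> (\<exists>X\<in>P. u \<in> X \<and> v \<in> X))"
    using partition_on_quotient[OF C] by blast
next
  assume "\<exists>P. partition_on V P \<and> (\<forall>X\<in>P. card X \<le> 2) \<and>
         (\<forall>u\<in>V. \<forall>v\<in>V. R u v \<longleftrightarrow> u \<noteq> v \<and> (\<exists>X\<in>P. u \<in> X \<and> v \<in> X))"
  then obtain P where P: "partition_on V P" "\<forall>X\<in>P. card X \<le> 2"
    and R: "\<forall>u\<in>V. \<forall>v\<in>V. R u v \<longleftrightarrow> u \<noteq> v \<and> (\<exists>X\<in>P. u \<in> X \<and> v \<in> X)"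
    by blast
  have "u = w" if uvw: "v \<in> V" "u \<in> V" "w \<in> V" "R v u" "R v w" for u v w
  proof (rule ccontr)
    assume "u \<noteq> w"
    have "v \<noteq> u \<and> (\<exists>X\<in>P. v \<in> X \<and> u \<in> X)" "v \<noteq> w \<and> (\<exists>Y\<in>P. v \<in> Y \<and> w \<in> Y)"
      using R uvw by simp_all
    then obtain X Y where "X \<in> P" "Y \<in> P" "v \<in> X" "u \<in> X" "v \<in> Y" "w \<in> Y" "u \<noteq> v" "w \<noteq> v"
      by blast
    then have "{v, u, w} \<subseteq> X" "X \<subseteq> V"
      using partition_on_block_unique[OF P(1)] P(1) by (auto simp: partition_on_def)
    then have "card {v, u, w} \<le> card X"
      using fin by (intro card_mono) (auto intro: finite_subset)
    then show False
      using P(2) \<open>X \<in> P\<close> \<open>u \<noteq> w\<close> \<open>u \<noteq> v\<close> \<open>w \<noteq> v\<close> by auto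
  qed
  then show "max_degree_le_one V R"
    by (simp add: max_degree_le_one_iff_unique_neighbour[OF fin])
qed

lemma partition_on_ex_block_notin_iff:
  assumes "partition_on V P" "u \<in> V"
  shows "(\<exists>X\<in>P. u \<in> X \<and> v \<notin> X) \<longleftrightarrow> \<not> (\<exists>X\<in>P. u \<in> X \<and> v \<in> X)"
  using assms partition_on_block_unique[OF assms(1)] by (auto simp: partition_on_def)

lemma partition_on_card_le_2_iff:
  assumes "finite V" "partition_on V P"
  shows "(\<forall>X\<in>P. card X \<le> 2) \<longleftrightarrow> (\<forall>X\<in>P. card X = 1 \<or> card X = 2)"
proof -
  have "card X \<noteq> 0" if "X \<in> P" for X
    using assms that by (metis Union_upper card_eq_0_iff finite_subset partition_onD1 partition_onD3)
  then show ?thesis by force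
qed

lemma dissociation_set_subset:
  assumes "finite V" "dissociation_set V E D" "D' \<subseteq> D"
  shows "dissociation_set V E D'"
  using assms max_degree_le_one_subset[of D E D'] finite_subset
  by (auto simp: dissociation_set_iff_max_degree_le_one)

lemma dissociation_set_if_card_le_2:
  assumes "simple_graph V E" "D \<subseteq> V" "card D \<le> 2"
  shows "dissociation_set V E D"
  using assms max_degree_le_one_if_card_le_2[of D E] finite_subset
  by (auto simp: dissociation_set_iff_max_degree_le_one simple_graph_def)

lemma dissociation_set_whole_iff_union_K1_K2:
  assumes "simple_graph V E"
  shows "dissociation_set V E V \<longleftrightarrow> union_K1_K2 V E"
proof -
  have fin: "finite V" and "\<And>u v. E u v \<Longrightarrow> E v u" "\<And>v. \<not> E v v"
    using assms by (auto simp: simple_graph_def)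
  then have "max_degree_le_one V E \<longleftrightarrow>
    (\<exists>P. partition_on V P \<and> (\<forall>X\<in>P. card X \<le> 2) \<and>
         (\<forall>u\<in>V. \<forall>v\<in>V. E u v \<longleftrightarrow> u \<noteq> v \<and> (\<exists>X\<in>P. u \<in> X \<and> v \<in> X)))"
    by (rule max_degree_le_one_iff_partition)
  then show ?thesis
    unfolding dissociation_set_iff_max_degree_le_one union_K1_K2_def
    using partition_on_card_le_2_iff[OF fin] by auto
qed

lemma complete_multipartite_le2_iff:
  assumes "simple_graph V E"
  shows "complete_multipartite_le2 V E \<longleftrightarrow> max_degree_le_one V (graph_complement E)"
proof -
  have fin: "finite V" and sym: "\<And>u v. E u v \<Longrightarrow> E v u" and irrefl: "\<And>v. \<not> E v v"
    using assms by (auto simp: simple_graph_def)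
  have "(E u v \<longleftrightarrow> (\<exists>X\<in>P. u \<in> X \<and> v \<notin> X)) \<longleftrightarrow>
        (graph_complement E u v \<longleftrightarrow> u \<noteq> v \<and> (\<exists>X\<in>P. u \<in> X \<and> v \<in> X))"
    if "partition_on V P" "u \<in> V" for P u v
    using partition_on_ex_block_notin_iff[OF that, of v] irrefl[of u]
    by (auto simp: graph_complement_def)
  moreover have "max_degree_le_one V (graph_complement E) \<longleftrightarrow>
    (\<exists>P. partition_on V P \<and> (\<forall>X\<in>P. card X \<le> 2) \<and>
         (\<forall>u\<in>V. \<forall>v\<in>V. graph_complement E u v \<longleftrightarrow> u \<noteq> v \<and> (\<exists>X\<in>P. u \<in> X \<and> v \<in> X)))"
    using fin sym by (intro max_degree_le_one_iff_partition) (auto simp: graph_complement_def)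
  ultimately show ?thesis
    unfolding complete_multipartite_le2_def by (smt (verit))
qed

lemma card_dissociation_set_le_2:
  assumes "simple_graph V E" "max_degree_le_one V (graph_complement E)" "dissociation_set V E D"
  shows "card D \<le> 2"
proof (rule ccontr)
  have fin: "finite V" and sym: "\<And>u v. E u v \<Longrightarrow> E v u"
    using assms(1) by (auto simp: simple_graph_def)
  have "D \<subseteq> V" "max_degree_le_one D E"
    using assms(3) by (auto simp: dissociation_set_iff_max_degree_le_one)
  then have E_unique: "\<And>x y z. x \<in> D \<Longrightarrow> y \<in> D \<Longrightarrow> z \<in> D \<Longrightarrow> E x y \<Longrightarrow> E x z \<Longrightarrow> y = z"
    using finite_subset[OF _ fin] by (auto simp: max_degree_le_one_iff_unique_neighbour)
  have C_unique: "\<And>x y z. x \<in> D \<Longrightarrow> y \<in> D \<Longrightarrow> z \<in> D \<Longrightarrow>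
      graph_complement E x y \<Longrightarrow> graph_complement E x z \<Longrightarrow> y = z"
    using assms(2) \<open>D \<subseteq> V\<close> unfolding max_degree_le_one_iff_unique_neighbour[OF fin] by blast
  assume "\<not> card D \<le> 2"
  then obtain T where "T \<subseteq> D" "card T = 3"
    using obtain_subset_with_card_n[of 3 D] by auto
  then obtain a b c where abc: "a \<in> D" "b \<in> D" "c \<in> D" "a \<noteq> b" "a \<noteq> c" "b \<noteq> c"
    by (auto simp: card_3_iff)
  \<comment> \<open>Each of a, b, c would have exactly one neighbour and one non-neighbour among the
    other two, so the edges inside {a, b, c} would form a perfect matching.\<close>
  show False
  proof (cases "E a b")
    case True
    then have "graph_complement E c a" "graph_complement E c b"
      using E_unique[of a b c] E_unique[of b a c] sym abc by (auto simp: graph_complement_def)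
    then show False using C_unique[of c a b] abc by blast
  next
    case False
    then have "graph_complement E b a" "graph_complement E b c"
      using C_unique[of a b c] E_unique[of c a b] sym abc by (auto simp: graph_complement_def)
    then show False using C_unique[of b a c] abc by blast
  qed
qed

lemma dissociation_sets_card_le_2_iff:
  assumes "simple_graph V E"
  shows "(\<forall>D. dissociation_set V E D \<longrightarrow> card D \<le> 2) \<longleftrightarrow>
    max_degree_le_one V (graph_complement E)"
proof
  have fin: "finite V" and sym: "\<And>u v. E u v \<Longrightarrow> E v u" and irrefl: "\<And>v. \<not> E v v"
    using assms by (auto simp: simple_graph_def)
  assume small: "\<forall>D. dissociation_set V E D \<longrightarrow> card D \<le> 2"
  have "a = b" if "v \<in> V" "a \<in> V" "b \<in> V" "graph_complement E v a" "graph_complement E v b"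
    for v a b
  proof (rule ccontr)
    assume "a \<noteq> b"
    have "\<not> E v a" "\<not> E v b" "\<not> E a v" "\<not> E b v" "v \<noteq> a" "v \<noteq> b"
      using that sym by (auto simp: graph_complement_def)
    then have "max_degree_le_one {v, a, b} E"
      using irrefl by (auto simp: max_degree_le_one_iff_unique_neighbour)
    then have "dissociation_set V E {v, a, b}"
      using that by (simp add: dissociation_set_iff_max_degree_le_one)
    moreover have "card {v, a, b} = 3"
      using that \<open>a \<noteq> b\<close> by (auto simp: graph_complement_def)
    ultimately show False using small by fastforce
  qed
  then show "max_degree_le_one V (graph_complement E)"
    by (simp add: max_degree_le_one_iff_unique_neighbour[OF fin])
next
  show "max_degree_le_one V (graph_complement E) \<Longrightarrow>
    \<forall>D. dissociation_set V E D \<longrightarrow> card D \<le> 2"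
    using card_dissociation_set_le_2[OF assms] by blast
qed

lemma card_subsets_card_le_2:
  assumes "finite V"
  shows "2 * card {D. D \<subseteq> V \<and> card D \<le> 2} = card V ^ 2 + card V + 2"
proof -
  let ?A = "\<lambda>k. {D. D \<subseteq> V \<and> card D = k}"
  have finite_A: "finite (?A k)" for k
    by (rule finite_subset[of _ "Pow V"]) (use assms in auto)
  have "{D. D \<subseteq> V \<and> card D \<le> 2} = ?A 0 \<union> ?A 1 \<union> ?A 2"
    by auto
  moreover have "card (?A 0 \<union> ?A 1 \<union> ?A 2) = card (?A 0) + card (?A 1) + card (?A 2)"
    using finite_A by (subst card_Un_disjoint, auto)+
  ultimately have "card {D. D \<subseteq> V \<and> card D \<le> 2} = 1 + card V + (card V choose 2)"
    using n_subsets[OF assms] by simp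
  moreover have "2 * (card V choose 2) = card V * (card V - 1)"
  proof (cases "card V")
    case (Suc m)
    have "even (Suc m * m)" by simp
    then show ?thesis using Suc by (simp add: choose_two)
  qed simp
  ultimately show ?thesis
    by (cases "card V") (auto simp: power2_eq_square algebra_simps)
qed

theorem theorem2p1:
  fixes V :: "'a set" and E :: "'a \<Rightarrow> 'a \<Rightarrow> bool"
  assumes "simple_graph V E" and "card V \<ge> 1"
  shows "(real (card V ^ 2 + card V + 2) / 2 \<le> real (diss_count V E) \<and>
          diss_count V E \<le> 2 ^ card V)
       \<and> (real (diss_count V E) = real (card V ^ 2 + card V + 2) / 2
            \<longleftrightarrow> complete_multipartite_le2 V E)
       \<and> (diss_count V E = 2 ^ card V \<longleftrightarrow> union_K1_K2 V E)"
proof -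
  have fin: "finite V"
    using assms(1) by (simp add: simple_graph_def)
  define S where "S = {D. dissociation_set V E D}"
  define T where "T = {D. D \<subseteq> V \<and> card D \<le> 2}"
  have "T \<subseteq> S" "S \<subseteq> Pow V"
    using dissociation_set_if_card_le_2[OF assms(1)] by (auto simp: S_def T_def dissociation_set_def)
  moreover have "finite S"
    using fin \<open>S \<subseteq> Pow V\<close> finite_subset by blast
  ultimately have "card T \<le> card S" "card S = card T \<longleftrightarrow> S = T"
    using card_mono[of S T] card_subset_eq[of S T] by auto
  moreover have "card S \<le> 2 ^ card V" "card S = 2 ^ card V \<longleftrightarrow> S = Pow V"
    using card_mono[of "Pow V" S] card_subset_eq[of "Pow V" S] \<open>S \<subseteq> Pow V\<close>
    by (auto simp: fin card_Pow)
  moreover have "S = T \<longleftrightarrow> complete_multipartite_le2 V E"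
    using \<open>T \<subseteq> S\<close> unfolding complete_multipartite_le2_iff[OF assms(1)]
      dissociation_sets_card_le_2_iff[OF assms(1), symmetric]
    by (auto simp: S_def T_def dissociation_set_def)
  moreover have "S = Pow V \<longleftrightarrow> union_K1_K2 V E"
    using dissociation_set_subset[OF fin] \<open>S \<subseteq> Pow V\<close>
    unfolding dissociation_set_whole_iff_union_K1_K2[OF assms(1), symmetric] by (auto simp: S_def)
  moreover have "real (card V ^ 2 + card V + 2) / 2 = real (card T)"
    unfolding T_def card_subsets_card_le_2[OF fin, symmetric] by simp
  moreover have "diss_count V E = card S"
    by (simp add: diss_count_def S_def)
  ultimately show ?thesis
    by (simp only: of_nat_le_iff of_nat_eq_iff)
qed

end
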